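(* Let $Z$ be an abelian group, $K$ a group, and $\theta,\mu:K\times K\to Z$ loop cocycles such that $\nu(x,y)=\theta(x,y)\mu(x,y)^{-1}$ is a group cocycle. Then the left inner mappings of $K\ltimes_\theta Z$ and $K\ltimes_\mu Z$ coincide: for all $u,v,w\in K\times Z$, the element $(uv)\backslash(u(vw))$ computed in $K\ltimes_\theta Z$ equals the one computed in $K\ltimes_\mu Z$.
   Context: A loop cocycle is a map $\theta:K\times K\to Z$ with $\theta(x,1)=\theta(1,x)=1$ for all $x\in K$. It is a group cocycle if moreover $\theta(x,y)\theta(xy,z)=\theta(y,z)\theta(x,yz)$ for all $x,y,z\in K$. For a loop cocycle $\theta$, $K\ltimes_\theta Z$ is the loop on $K\times Z$ with multiplication $(x,a)(y,b)=(xy,\,ab\,\theta(x,y))$; $u\backslash w$ denotes the unique $z$ with $uz=w$. *)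

theory Defs
  imports Main
begin

text \<open>Convention: the group K is written additively via the class group_add
(not assumed commutative); the abelian group Z is written additively via ab_group_add.
So the identity 1 is 0, products are sums, and a b theta(x,y) becomes a + b + theta x y.\<close>

definition loop_cocycle :: "('k::group_add \<Rightarrow> 'k \<Rightarrow> 'z::ab_group_add) \<Rightarrow> bool" where
  "loop_cocycle \<theta> \<longleftrightarrow> (\<forall>x. \<theta> x 0 = 0 \<and> \<theta> 0 x = 0)"

definition group_cocycle :: "('k::group_add \<Rightarrow> 'k \<Rightarrow> 'z::ab_group_add) \<Rightarrow> bool" where
  "group_cocycle \<theta> \<longleftrightarrow> loop_cocycle \<theta> \<and>
     (\<forall>x y z. \<theta> x y + \<theta> (x + y) z = \<theta> y z + \<theta> x (y + z))"

definition cmult :: "('k::group_add \<Rightarrow> 'k \<Rightarrow> 'z::ab_group_add) \<Rightarrow> 'k \<times> 'z \<Rightarrow> 'k \<times> 'z \<Rightarrow> 'k \<times> 'z" where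
  "cmult \<theta> u v = (fst u + fst v, snd u + snd v + \<theta> (fst u) (fst v))"

definition cldiv :: "('k::group_add \<Rightarrow> 'k \<Rightarrow> 'z::ab_group_add) \<Rightarrow> 'k \<times> 'z \<Rightarrow> 'k \<times> 'z \<Rightarrow> 'k \<times> 'z" where
  "cldiv \<theta> u w = (THE z. cmult \<theta> u z = w)"

end

theory Submission
  imports Defs
begin

(* In K \<ltimes>_\<theta> Z left division has the closed form
     (x,a) \<setminus> (z,c) = (-x + z, c - a - \<theta> x (-x + z)).
   Computing (uv)\<setminus>(u(vw)) with it shows that the left inner mapping fixes the
   K-component of w and shifts its Z-component by the associativity defect
     \<delta>\<theta>(x,y,z) = \<theta>(y,z) + \<theta>(x,y+z) - \<theta>(x,y) - \<theta>(x+y,z)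
   of \<theta> at the K-components x, y, z of u, v, w.  The defect is additive in the
   cocycle and vanishes exactly on group cocycles, so \<delta>\<theta> - \<delta>\<mu> = \<delta>(\<theta> - \<mu>) = 0,
   and the two left inner mappings agree.  Neither closed form needs \<theta> to be
   normalized. *)

definition cocycle_defect :: "('k::group_add \<Rightarrow> 'k \<Rightarrow> 'z::ab_group_add) \<Rightarrow> 'k \<Rightarrow> 'k \<Rightarrow> 'k \<Rightarrow> 'z" where
  "cocycle_defect \<theta> x y z = \<theta> y z + \<theta> x (y + z) - \<theta> x y - \<theta> (x + y) z"

lemma cldiv_eq:
  "cldiv \<theta> u w = (- fst u + fst w, snd w - snd u - \<theta> (fst u) (- fst u + fst w))"
  unfolding cldiv_def
proof (rule the_equality)
  show "cmult \<theta> u (- fst u + fst w, snd w - snd u - \<theta> (fst u) (- fst u + fst w)) = w"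
    by (simp add: cmult_def add.assoc[symmetric] prod_eq_iff)
next
  fix z assume "cmult \<theta> u z = w"
  then have "fst z = - fst u + fst w" and "snd z = snd w - snd u - \<theta> (fst u) (fst z)"
    by (auto simp: cmult_def add.assoc[symmetric])
  then show "z = (- fst u + fst w, snd w - snd u - \<theta> (fst u) (- fst u + fst w))"
    by (simp add: prod_eq_iff)
qed

lemma left_inner_map_eq:
  "cldiv \<theta> (cmult \<theta> u v) (cmult \<theta> u (cmult \<theta> v w))
     = (fst w, snd w + cocycle_defect \<theta> (fst u) (fst v) (fst w))"
proof -
  have K_part: "- (fst u + fst v) + (fst u + (fst v + fst w)) = fst w"
    by (simp add: add.assoc[symmetric] minus_add)
  show ?thesis
    unfolding cldiv_eq cmult_def fst_conv snd_conv K_part cocycle_defect_def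
    by (simp add: algebra_simps)
qed

lemma cocycle_defect_diff:
  "cocycle_defect (\<lambda>x y. \<theta> x y - \<mu> x y) x y z
     = cocycle_defect \<theta> x y z - cocycle_defect \<mu> x y z"
  unfolding cocycle_defect_def by (simp add: algebra_simps)

lemma group_cocycle_defect_zero:
  assumes "group_cocycle \<nu>"
  shows "cocycle_defect \<nu> x y z = 0"
  using assms unfolding group_cocycle_def cocycle_defect_def
  by (simp add: algebra_simps)

theorem lemma4p10:
  fixes \<theta> \<mu> :: "'k::group_add \<Rightarrow> 'k \<Rightarrow> 'z::ab_group_add"
  assumes "loop_cocycle \<theta>" and "loop_cocycle \<mu>"
    and "group_cocycle (\<lambda>x y. \<theta> x y - \<mu> x y)"
  shows "\<forall>u v w. cldiv \<theta> (cmult \<theta> u v) (cmult \<theta> u (cmult \<theta> v w))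
               = cldiv \<mu> (cmult \<mu> u v) (cmult \<mu> u (cmult \<mu> v w))"
proof (intro allI)
  fix u v w :: "'k \<times> 'z"
  have "cocycle_defect \<theta> (fst u) (fst v) (fst w) = cocycle_defect \<mu> (fst u) (fst v) (fst w)"
    using group_cocycle_defect_zero[OF assms(3)] cocycle_defect_diff[of \<theta> \<mu>] by simp
  then show "cldiv \<theta> (cmult \<theta> u v) (cmult \<theta> u (cmult \<theta> v w))
               = cldiv \<mu> (cmult \<mu> u v) (cmult \<mu> u (cmult \<mu> v w))"
    by (simp add: left_inner_map_eq)
qed

end
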